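(* Let $\Gamma$ be a distance-regular graph with valency $k$ and diameter $D\geq 2$. Let $s$ be maximal such that for every vertex $x$ and all $y,z\in\Gamma(x)$ with $y\not\sim z$, there exists a co-clique of size at least $s$ in $\Delta(x)$ containing $y$ and $z$. Then (i) $s\geq \frac{k}{a_1+1}$; (ii) $c_2-1\geq \max\{\frac{s'(a_1+1)-k}{\binom{s'}{2}} : 2\leq s'\leq s\}$, and equality implies that $\Gamma$ is a Terwilliger graph.
   Context: A connected graph $\Gamma$ of diameter $D$ is distance-regular if there are integers $b_i,c_i$ ($0\le i\le D$) such that for any two vertices $x,y$ at distance $i$, exactly $c_i$ neighbours of $y$ are at distance $i-1$ from $x$ and exactly $b_i$ neighbours of $y$ are at distance $i+1$ from $x$. Then $\Gamma$ is regular of valency $k=b_0$, and $a_i:=k-b_i-c_i$. $\Gamma(x)$ denotes the set of neighbours of $x$, and the local graph $\Delta(x)$ is the subgraph induced on $\Gamma(x)$. A co-clique is a set of pairwise non-adjacent vertices. A Terwilliger graph is a connected non-complete graph such that for any two vertices $u,v$ at distance two, the subgraph induced on their common neighbours is a clique of size $\mu$, for some fixed $\mu\geq 1$. *)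

theory Defs
  imports Complex_Main
begin

definition simple_graph :: "'a set \<Rightarrow> ('a \<Rightarrow> 'a \<Rightarrow> bool) \<Rightarrow> bool" where
  "simple_graph V E \<longleftrightarrow> finite V \<and> V \<noteq> {} \<and>
     (\<forall>u v. E u v \<longrightarrow> u \<in> V \<and> v \<in> V) \<and>
     (\<forall>u v. E u v \<longrightarrow> E v u) \<and> (\<forall>u. \<not> E u u)"

definition adj_rel :: "'a set \<Rightarrow> ('a \<Rightarrow> 'a \<Rightarrow> bool) \<Rightarrow> ('a \<times> 'a) set" where
  "adj_rel V E = {(u, v). u \<in> V \<and> v \<in> V \<and> E u v}"

definition gdist :: "'a set \<Rightarrow> ('a \<Rightarrow> 'a \<Rightarrow> bool) \<Rightarrow> 'a \<Rightarrow> 'a \<Rightarrow> nat" where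
  "gdist V E x y = (LEAST n. (x, y) \<in> (adj_rel V E) ^^ n)"

definition connected_graph :: "'a set \<Rightarrow> ('a \<Rightarrow> 'a \<Rightarrow> bool) \<Rightarrow> bool" where
  "connected_graph V E \<longleftrightarrow> (\<forall>x\<in>V. \<forall>y\<in>V. \<exists>n. (x, y) \<in> (adj_rel V E) ^^ n)"

definition diameter :: "'a set \<Rightarrow> ('a \<Rightarrow> 'a \<Rightarrow> bool) \<Rightarrow> nat" where
  "diameter V E = Max {gdist V E x y | x y. x \<in> V \<and> y \<in> V}"

definition nbrs :: "('a \<Rightarrow> 'a \<Rightarrow> bool) \<Rightarrow> 'a \<Rightarrow> 'a set" where
  "nbrs E x = {y. E x y}"

definition distance_regular ::
  "'a set \<Rightarrow> ('a \<Rightarrow> 'a \<Rightarrow> bool) \<Rightarrow> (nat \<Rightarrow> nat) \<Rightarrow> (nat \<Rightarrow> nat) \<Rightarrow> bool" where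
  "distance_regular V E b c \<longleftrightarrow> simple_graph V E \<and> connected_graph V E \<and>
     (\<forall>x\<in>V. \<forall>y\<in>V.
        card {z \<in> nbrs E y. gdist V E x z = gdist V E x y + 1} = b (gdist V E x y) \<and>
        (gdist V E x y \<ge> 1 \<longrightarrow>
           card {z \<in> nbrs E y. gdist V E x z = gdist V E x y - 1} = c (gdist V E x y)))"

definition a_num :: "(nat \<Rightarrow> nat) \<Rightarrow> (nat \<Rightarrow> nat) \<Rightarrow> nat \<Rightarrow> nat" where
  "a_num b c i = b 0 - b i - c i"

definition coclique :: "('a \<Rightarrow> 'a \<Rightarrow> bool) \<Rightarrow> 'a set \<Rightarrow> bool" where
  "coclique E S \<longleftrightarrow> (\<forall>u\<in>S. \<forall>v\<in>S. \<not> E u v)"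

definition clique :: "('a \<Rightarrow> 'a \<Rightarrow> bool) \<Rightarrow> 'a set \<Rightarrow> bool" where
  "clique E S \<longleftrightarrow> (\<forall>u\<in>S. \<forall>v\<in>S. u \<noteq> v \<longrightarrow> E u v)"

definition local_coclique_prop :: "'a set \<Rightarrow> ('a \<Rightarrow> 'a \<Rightarrow> bool) \<Rightarrow> nat \<Rightarrow> bool" where
  "local_coclique_prop V E s \<longleftrightarrow>
     (\<forall>x\<in>V. \<forall>y z. E x y \<and> E x z \<and> y \<noteq> z \<and> \<not> E y z \<longrightarrow>
        (\<exists>S. S \<subseteq> nbrs E x \<and> coclique E S \<and> y \<in> S \<and> z \<in> S \<and> card S \<ge> s))"

definition complete_graph :: "'a set \<Rightarrow> ('a \<Rightarrow> 'a \<Rightarrow> bool) \<Rightarrow> bool" where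
  "complete_graph V E \<longleftrightarrow> (\<forall>u\<in>V. \<forall>v\<in>V. u \<noteq> v \<longrightarrow> E u v)"

definition terwilliger :: "'a set \<Rightarrow> ('a \<Rightarrow> 'a \<Rightarrow> bool) \<Rightarrow> bool" where
  "terwilliger V E \<longleftrightarrow> connected_graph V E \<and> \<not> complete_graph V E \<and>
     (\<exists>\<mu>::nat. \<mu> \<ge> 1 \<and> (\<forall>u\<in>V. \<forall>v\<in>V. gdist V E u v = 2 \<longrightarrow>
        clique E (nbrs E u \<inter> nbrs E v) \<and> card (nbrs E u \<inter> nbrs E v) = \<mu>))"

end

theory Submission
  imports Defs
begin

text \<open>Fix a vertex \<open>x\<close> and a co-clique \<open>T\<close> of size \<open>t\<close> in \<open>\<Delta>(x)\<close>. Each \<open>u \<in> T\<close> together with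
  its \<open>a\<^sub>1\<close> neighbours in \<open>\<Gamma>(x)\<close> gives a subset of \<open>\<Gamma>(x)\<close> of size \<open>a\<^sub>1 + 1\<close>, so by the Bonferroni
  inequality \<open>k \<ge> t (a\<^sub>1 + 1) - \<Sum> |\<Gamma>(u) \<inter> \<Gamma>(v) \<inter> \<Gamma>(x)|\<close>, summed over the pairs of \<open>T\<close>. The
  vertices \<open>u, v\<close> are at distance 2 and \<open>x\<close> is one of their \<open>c\<^sub>2\<close> common neighbours lying outside
  \<open>\<Gamma>(x)\<close>, so each summand is at most \<open>c\<^sub>2 - 1\<close>; this is (ii). If equality holds for some \<open>t\<close>,
  every such summand equals \<open>c\<^sub>2 - 1\<close>; but two non-adjacent common neighbours \<open>w, w'\<close> of
  \<open>u, v\<close> would, for \<open>x = w\<close>, give two common neighbours outside \<open>\<Gamma>(w)\<close>. Hence all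
  \<open>\<mu>\<close>-graphs are cliques. For (i), a co-clique through \<open>y, z\<close> that is maximal in \<open>\<Delta>(x)\<close>
  dominates \<open>\<Delta>(x)\<close>, so the \<open>k\<close> vertices of \<open>\<Gamma>(x)\<close> are covered by its members' closed
  neighbourhoods of size \<open>a\<^sub>1 + 1\<close>.\<close>

lemma two_mult_choose_two: "2 * (n choose 2) = n * (n - 1)"
  by (cases "even n") (auto simp: choose_two)

text \<open>Bonferroni's inequality, with each unordered pair counted twice.\<close>

lemma card_UN_pairwise_lower_bound:
  fixes A :: "'i \<Rightarrow> 'a set"
  assumes "finite I" and "\<And>i. i \<in> I \<Longrightarrow> finite (A i)"
  shows "2 * (\<Sum>i\<in>I. int (card (A i))) - (\<Sum>i\<in>I. \<Sum>j\<in>I - {i}. int (card (A i \<inter> A j)))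
           \<le> 2 * int (card (\<Union>i\<in>I. A i))"
  using assms
proof (induction I rule: finite_induct)
  case empty
  then show ?case by simp
next
  case (insert w F)
  define U where "U = (\<Union>i\<in>F. A i)"
  define p where "p i j = int (card (A i \<inter> A j))" for i j
  have IH: "2 * (\<Sum>i\<in>F. int (card (A i))) - (\<Sum>i\<in>F. \<Sum>j\<in>F - {i}. p i j) \<le> 2 * int (card U)"
    using insert by (simp add: U_def p_def)
  have "card (A w \<inter> U) \<le> (\<Sum>j\<in>F. card (A w \<inter> A j))"
    unfolding U_def Int_UN_distrib by (rule card_UN_le[OF insert.hyps(1)])
  then have overlap: "int (card (A w \<inter> U)) \<le> (\<Sum>j\<in>F. p w j)"
    unfolding p_def by (simp flip: of_nat_sum)
  have "card (A w) + card U = card (A w \<union> U) + card (A w \<inter> U)"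
    using insert.prems by (intro card_Un_Int) (auto simp: U_def insert.hyps)
  then have union: "int (card (A w \<union> U)) = int (card (A w)) + int (card U) - int (card (A w \<inter> U))"
    by linarith
  have "(\<Sum>i\<in>F. \<Sum>j\<in>insert w F - {i}. p i j) = (\<Sum>i\<in>F. p i w + (\<Sum>j\<in>F - {i}. p i j))"
  proof (rule sum.cong[OF refl])
    fix i assume "i \<in> F"
    then have "insert w F - {i} = insert w (F - {i})" using insert.hyps by auto
    then show "(\<Sum>j\<in>insert w F - {i}. p i j) = p i w + (\<Sum>j\<in>F - {i}. p i j)"
      using insert.hyps by simp
  qed
  also have "\<dots> = (\<Sum>j\<in>F. p w j) + (\<Sum>i\<in>F. \<Sum>j\<in>F - {i}. p i j)"
    by (simp add: sum.distrib p_def Int_commute)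
  finally have pairs: "(\<Sum>i\<in>insert w F. \<Sum>j\<in>insert w F - {i}. p i j)
      = 2 * (\<Sum>j\<in>F. p w j) + (\<Sum>i\<in>F. \<Sum>j\<in>F - {i}. p i j)"
    using insert.hyps by (simp add: insert_Diff_if)
  show ?case
    using IH overlap union pairs insert.hyps by (simp add: U_def p_def)
qed

lemma divide_choose_two_le:
  fixes X B P :: int and t :: nat
  assumes t: "2 \<le> t" and "0 \<le> P" and bound: "2 * X + P \<le> int t * (int t - 1) * B"
  shows "real_of_int X / real (t choose 2) \<le> real_of_int B"
    and "real_of_int X / real (t choose 2) = real_of_int B \<Longrightarrow> P = 0"
proof -
  have "real (2 * (t choose 2)) = real (t * (t - 1))"
    by (simp only: two_mult_choose_two)
  then have C: "2 * real (t choose 2) = real_of_int (int t * (int t - 1))"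
    using t by (simp add: of_nat_diff)
  have C_pos: "real (t choose 2) > 0"
    using t by simp
  have "real_of_int (2 * X + P) \<le> real_of_int (int t * (int t - 1) * B)"
    using bound by linarith
  then have "2 * real_of_int X + real_of_int P \<le> 2 * real (t choose 2) * real_of_int B"
    unfolding C by simp
  then have scaled: "2 * real_of_int X + real_of_int P \<le> 2 * (real_of_int B * real (t choose 2))"
    by (simp add: mult_ac)
  then show "real_of_int X / real (t choose 2) \<le> real_of_int B"
    using C_pos \<open>0 \<le> P\<close> by (simp add: divide_le_eq)
  assume "real_of_int X / real (t choose 2) = real_of_int B"
  then have "real_of_int X = real_of_int B * real (t choose 2)"
    using C_pos by (simp add: divide_eq_eq)
  then show "P = 0"
    using scaled \<open>0 \<le> P\<close> by linarith
qed

lemma maximal_coclique_extension: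
  assumes A: "finite A" and S\<^sub>0: "S\<^sub>0 \<subseteq> A" "coclique E S\<^sub>0"
    and irrefl: "\<And>u. \<not> E u u" and sym: "\<And>u v. E u v \<Longrightarrow> E v u"
  obtains S where "S\<^sub>0 \<subseteq> S" "S \<subseteq> A" "coclique E S" "\<forall>w\<in>A - S. \<exists>u\<in>S. E u w"
proof -
  define P where "P S \<longleftrightarrow> S\<^sub>0 \<subseteq> S \<and> S \<subseteq> A \<and> coclique E S" for S
  have "P S\<^sub>0"
    using S\<^sub>0 by (simp add: P_def)
  moreover have "\<forall>S. P S \<longrightarrow> card S < card A + 1"
    using A by (simp add: P_def card_mono le_imp_less_Suc)
  ultimately obtain S where S: "P S" and max: "\<And>S'. P S' \<Longrightarrow> card S' \<le> card S"
    using ex_has_greatest_nat[of P S\<^sub>0 card] by blast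
  have "\<exists>u\<in>S. E u w" if w: "w \<in> A - S" for w
  proof (rule ccontr)
    assume "\<not> (\<exists>u\<in>S. E u w)"
    then have "coclique E (insert w S)"
      using S irrefl sym unfolding P_def coclique_def by blast
    then have "P (insert w S)"
      using S w unfolding P_def by blast
    then have "card (insert w S) \<le> card S"
      by (rule max)
    moreover have "finite S"
      using S A finite_subset unfolding P_def by blast
    ultimately show False
      using w by simp
  qed
  then show ?thesis
    using S that unfolding P_def by blast
qed

lemma gdist_le_walk: "(x, y) \<in> adj_rel V E ^^ n \<Longrightarrow> gdist V E x y \<le> n"
  unfolding gdist_def by (rule Least_le)

lemma walk_2_iff:
  assumes "simple_graph V E"
  shows "(x, y) \<in> adj_rel V E ^^ 2 \<longleftrightarrow> (\<exists>w. E x w \<and> E w y)"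
  using assms unfolding numeral_2_eq_2 relpow.simps adj_rel_def simple_graph_def by auto

locale distance_regular_graph =
  fixes V :: "'a set" and E :: "'a \<Rightarrow> 'a \<Rightarrow> bool" and b c :: "nat \<Rightarrow> nat"
  assumes distance_regular: "distance_regular V E b c"
begin

lemma simple: "simple_graph V E"
  and connected: "connected_graph V E"
  using distance_regular by (simp_all add: distance_regular_def)

lemma adj_in_V: "E x y \<Longrightarrow> x \<in> V" "E x y \<Longrightarrow> y \<in> V"
  and adj_sym: "E x y \<Longrightarrow> E y x"
  and adj_irrefl: "\<not> E x x"
  using simple by (simp_all add: simple_graph_def)

lemma finite_nbrs: "finite (nbrs E x)"
  using simple unfolding simple_graph_def nbrs_def
  by (metis (no_types, lifting) finite_subset mem_Collect_eq subsetI)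

lemma gdist_eq_iff:
  assumes "x \<in> V" "y \<in> V"
  shows "gdist V E x y = n \<longleftrightarrow>
    (x, y) \<in> adj_rel V E ^^ n \<and> (\<forall>m<n. (x, y) \<notin> adj_rel V E ^^ m)"
proof
  have "\<exists>n. (x, y) \<in> adj_rel V E ^^ n"
    using connected assms unfolding connected_graph_def by blast
  then have "(x, y) \<in> adj_rel V E ^^ gdist V E x y"
    unfolding gdist_def by (rule LeastI_ex)
  moreover have "(x, y) \<notin> adj_rel V E ^^ m" if "m < gdist V E x y" for m
    using that unfolding gdist_def by (rule not_less_Least)
  moreover assume "gdist V E x y = n"
  ultimately show "(x, y) \<in> adj_rel V E ^^ n \<and> (\<forall>m<n. (x, y) \<notin> adj_rel V E ^^ m)"
    by blast
next
  assume n: "(x, y) \<in> adj_rel V E ^^ n \<and> (\<forall>m<n. (x, y) \<notin> adj_rel V E ^^ m)"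
  show "gdist V E x y = n"
    unfolding gdist_def
  proof (rule Least_equality)
    show "(x, y) \<in> adj_rel V E ^^ n"
      using n by blast
    show "n \<le> m" if "(x, y) \<in> adj_rel V E ^^ m" for m
      using n that not_le by blast
  qed
qed

lemma gdist_0_iff: "x \<in> V \<Longrightarrow> y \<in> V \<Longrightarrow> gdist V E x y = 0 \<longleftrightarrow> x = y"
  by (simp add: gdist_eq_iff)

lemma gdist_1_iff: "x \<in> V \<Longrightarrow> y \<in> V \<Longrightarrow> gdist V E x y = 1 \<longleftrightarrow> E x y"
  using adj_irrefl by (auto simp: gdist_eq_iff adj_rel_def)

lemma gdist_2_iff:
  "x \<in> V \<Longrightarrow> y \<in> V \<Longrightarrow> gdist V E x y = 2 \<longleftrightarrow> x \<noteq> y \<and> \<not> E x y \<and> (\<exists>w. E x w \<and> E w y)"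
  using walk_2_iff[OF simple]
  by (auto simp: gdist_eq_iff adj_rel_def numeral_2_eq_2 less_Suc_eq)

lemma induced_path_if_diameter_ge_2:
  assumes "diameter V E \<ge> 2"
  obtains x y z where "E x y" "E x z" "y \<noteq> z" "\<not> E y z"
proof -
  have "finite V" "V \<noteq> {}"
    using simple by (auto simp: simple_graph_def)
  then have "diameter V E \<in> {gdist V E x y | x y. x \<in> V \<and> y \<in> V}"
    unfolding diameter_def by (intro Max_in) (auto intro: finite_image_set2)
  then obtain x y where xy: "x \<in> V" "y \<in> V" and n: "gdist V E x y \<ge> 2"
    using assms by auto
  define n where "n = gdist V E x y"
  have "(x, y) \<in> adj_rel V E ^^ n"
    using gdist_eq_iff[OF xy] n_def by blast
  moreover have "adj_rel V E ^^ n = adj_rel V E ^^ 2 O adj_rel V E ^^ (n - 2)"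
    using n n_def by (metis le_add_diff_inverse relpow_add)
  ultimately obtain m where m: "(x, m) \<in> adj_rel V E ^^ 2" "(m, y) \<in> adj_rel V E ^^ (n - 2)"
    by blast
  obtain w where w: "E x w" "E w m"
    using m(1) walk_2_iff[OF simple] by blast
  have "gdist V E x m \<ge> 2"
  proof (rule ccontr)
    assume "\<not> gdist V E x m \<ge> 2"
    moreover have "(x, m) \<in> adj_rel V E ^^ gdist V E x m"
      using gdist_eq_iff xy(1) adj_in_V(2)[OF w(2)] by blast
    with m(2) have "(x, y) \<in> adj_rel V E ^^ (gdist V E x m + (n - 2))"
      by (metis relcompI relpow_add)
    ultimately show False
      using gdist_le_walk n n_def by fastforce
  qed
  then have "x \<noteq> m" "\<not> E x m"
    using gdist_0_iff gdist_1_iff xy(1) adj_in_V(2)[OF w(2)] by fastforce+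
  then show ?thesis
    using that[of w x m] w adj_sym by blast
qed

lemma card_nbrs_farther:
  "x \<in> V \<Longrightarrow> y \<in> V \<Longrightarrow> card {z \<in> nbrs E y. gdist V E x z = gdist V E x y + 1} = b (gdist V E x y)"
  and card_nbrs_closer:
  "x \<in> V \<Longrightarrow> y \<in> V \<Longrightarrow> x \<noteq> y \<Longrightarrow>
    card {z \<in> nbrs E y. gdist V E x z = gdist V E x y - 1} = c (gdist V E x y)"
  using distance_regular gdist_0_iff unfolding distance_regular_def by (auto simp: Suc_le_eq)

lemma card_nbrs:
  assumes "x \<in> V"
  shows "card (nbrs E x) = b 0"
proof -
  have "{z \<in> nbrs E x. gdist V E x z = gdist V E x x + 1} = nbrs E x"
    using assms gdist_0_iff[OF assms assms] gdist_1_iff adj_in_V by (auto simp: nbrs_def)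
  then show ?thesis
    using card_nbrs_farther[OF assms assms] gdist_0_iff[OF assms assms] by simp
qed

lemma card_common_nbrs_adj:
  assumes "E x w"
  shows "card (nbrs E w \<inter> nbrs E x) = a_num b c 1"
proof -
  have V: "x \<in> V" "w \<in> V"
    using assms adj_in_V by blast+
  define layer where "layer j = {z \<in> nbrs E w. gdist V E x z = j}" for j
  have "gdist V E x w = 1"
    using V assms gdist_1_iff by blast
  then have "card (layer 2) = b 1" "card (layer 0) = c 1"
    using card_nbrs_farther[OF V] card_nbrs_closer[OF V] assms adj_irrefl
    unfolding layer_def by (auto simp: numeral_2_eq_2)
  have middle: "layer 1 = nbrs E w \<inter> nbrs E x"
    using V gdist_1_iff adj_in_V by (auto simp: layer_def nbrs_def)
  have "gdist V E x z \<le> 2" if "z \<in> nbrs E w" for z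
    using that assms walk_2_iff[OF simple] gdist_le_walk by (metis mem_Collect_eq nbrs_def)
  then have "card (nbrs E w) = card (\<Union>j\<in>{0, 1, 2}. layer j)"
    unfolding layer_def by (intro arg_cong[where f = card]) force
  also have "\<dots> = (\<Sum>j\<in>{0, 1, 2}. card (layer j))"
    using finite_nbrs by (intro card_UN_disjoint) (auto simp: layer_def)
  finally have "card (nbrs E w) = card (layer 0) + card (layer 1) + card (layer 2)"
    by simp
  then show ?thesis
    using card_nbrs[OF V(2)] \<open>card (layer 2) = b 1\<close> \<open>card (layer 0) = c 1\<close>
    unfolding a_num_def middle by linarith
qed

lemma card_common_nbrs_dist_2:
  assumes "u \<in> V" "v \<in> V" "gdist V E u v = 2"
  shows "card (nbrs E u \<inter> nbrs E v) = c 2"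
proof -
  have "{z \<in> nbrs E v. gdist V E u z = gdist V E u v - 1} = nbrs E u \<inter> nbrs E v"
    using assms gdist_1_iff adj_in_V adj_sym by (auto simp: nbrs_def)
  then show ?thesis
    using card_nbrs_closer assms gdist_0_iff by force
qed

lemma card_common_nbrs_split:
  assumes "E x u" "E x v" "u \<noteq> v" "\<not> E u v"
  shows "card (nbrs E u \<inter> nbrs E v \<inter> nbrs E w) + card (nbrs E u \<inter> nbrs E v - nbrs E w) = c 2"
proof -
  have "u \<in> V" "v \<in> V" "gdist V E u v = 2"
    using assms adj_in_V adj_sym gdist_2_iff by meson+
  then show ?thesis
    using card_common_nbrs_dist_2 card_Int_Diff finite_nbrs by (metis finite_Int)
qed

lemma card_closed_local_nbhd:
  assumes "E x u"
  shows "card (insert u (nbrs E u \<inter> nbrs E x)) = a_num b c 1 + 1"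
  using card_common_nbrs_adj[OF assms] finite_nbrs adj_irrefl by (simp add: nbrs_def)

lemma card_common_local_nbrs_less:
  assumes "E x u" "E x v" "u \<noteq> v" "\<not> E u v"
  shows "card (nbrs E u \<inter> nbrs E v \<inter> nbrs E x) < c 2"
proof -
  have "x \<in> nbrs E u \<inter> nbrs E v - nbrs E x"
    using assms adj_sym adj_irrefl by (simp add: nbrs_def)
  then have "card (nbrs E u \<inter> nbrs E v - nbrs E x) > 0"
    using finite_nbrs card_gt_0_iff by blast
  then show ?thesis
    using card_common_nbrs_split[OF assms, of x] by linarith
qed

lemma coclique_local_pairs_lower_bound:
  assumes x: "x \<in> V" and T: "T \<subseteq> nbrs E x" "coclique E T"
  shows "2 * (int (card T) * (int (a_num b c 1) + 1) - int (b 0))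
    \<le> (\<Sum>u\<in>T. \<Sum>v\<in>T - {u}. int (card (nbrs E u \<inter> nbrs E v \<inter> nbrs E x)))"
proof -
  define N where "N u = insert u (nbrs E u \<inter> nbrs E x)" for u
  have fin: "finite T" "\<And>u. finite (N u)"
    using T finite_nbrs finite_subset by (auto simp: N_def)
  have closed: "(\<Sum>u\<in>T. int (card (N u))) = int (card T) * (int (a_num b c 1) + 1)"
    using T card_closed_local_nbhd by (simp add: N_def nbrs_def subset_iff)
  have pairs: "(\<Sum>u\<in>T. \<Sum>v\<in>T - {u}. int (card (N u \<inter> N v)))
      = (\<Sum>u\<in>T. \<Sum>v\<in>T - {u}. int (card (nbrs E u \<inter> nbrs E v \<inter> nbrs E x)))"
    using T adj_irrefl unfolding N_def coclique_def nbrs_def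
    by (intro sum.cong refl arg_cong[where f = "\<lambda>A. int (card A)"]) auto
  have union: "int (card (\<Union>u\<in>T. N u)) \<le> int (b 0)"
    using T card_nbrs[OF x] card_mono[OF finite_nbrs] unfolding of_nat_le_iff
    by (metis N_def UN_least Int_lower2 insert_subset subsetD)
  have "2 * (\<Sum>u\<in>T. int (card (N u))) - (\<Sum>u\<in>T. \<Sum>v\<in>T - {u}. int (card (N u \<inter> N v)))
      \<le> 2 * int (b 0)"
    using card_UN_pairwise_lower_bound[of T N, OF fin] union by linarith
  then show ?thesis
    unfolding closed pairs by (simp add: algebra_simps)
qed

lemma coclique_ratio_bound:
  assumes x: "x \<in> V" and T: "T \<subseteq> nbrs E x" "coclique E T" and t: "card T = t" "2 \<le> t"
  defines "ratio \<equiv> (real t * (real (a_num b c 1) + 1) - real (b 0)) / real (t choose 2)"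
  shows "ratio \<le> real (c 2) - 1"
    and "ratio = real (c 2) - 1 \<Longrightarrow>
           \<forall>u\<in>T. \<forall>v\<in>T - {u}. card (nbrs E u \<inter> nbrs E v \<inter> nbrs E x) + 1 = c 2"
proof -
  define slack where "slack u v = int (c 2) - 1 - int (card (nbrs E u \<inter> nbrs E v \<inter> nbrs E x))" for u v
  define P where "P = (\<Sum>u\<in>T. \<Sum>v\<in>T - {u}. slack u v)"
  define X where "X = int t * (int (a_num b c 1) + 1) - int (b 0)"
  have fin: "finite T"
    using T finite_nbrs finite_subset by blast
  have slack_nonneg: "0 \<le> slack u v" if "u \<in> T" "v \<in> T - {u}" for u v
  proof -
    have "E x u" "E x v" "u \<noteq> v" "\<not> E u v"
      using that T by (auto simp: nbrs_def coclique_def)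
    then show ?thesis
      using card_common_local_nbrs_less unfolding slack_def by fastforce
  qed
  then have P_nonneg: "0 \<le> P"
    unfolding P_def by (intro sum_nonneg) auto
  have "(\<Sum>u\<in>T. \<Sum>v\<in>T - {u}. int (c 2) - 1) = int t * (int t - 1) * (int (c 2) - 1)"
    using fin t by (simp add: card_Diff_singleton of_nat_diff)
  then have "P = int t * (int t - 1) * (int (c 2) - 1)
      - (\<Sum>u\<in>T. \<Sum>v\<in>T - {u}. int (card (nbrs E u \<inter> nbrs E v \<inter> nbrs E x)))"
    unfolding P_def slack_def by (simp only: sum_subtractf)
  then have bound: "2 * X + P \<le> int t * (int t - 1) * (int (c 2) - 1)"
    using coclique_local_pairs_lower_bound[OF x T] t unfolding X_def by simp
  have ratio: "ratio = real_of_int X / real (t choose 2)"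
    unfolding ratio_def X_def by simp
  show "ratio \<le> real (c 2) - 1"
    using divide_choose_two_le(1)[OF t(2) P_nonneg bound] unfolding ratio by simp
  assume "ratio = real (c 2) - 1"
  then have "P = 0"
    using divide_choose_two_le(2)[OF t(2) P_nonneg bound] unfolding ratio by simp
  show "\<forall>u\<in>T. \<forall>v\<in>T - {u}. card (nbrs E u \<inter> nbrs E v \<inter> nbrs E x) + 1 = c 2"
  proof (intro ballI)
    fix u v assume u: "u \<in> T" and v: "v \<in> T - {u}"
    have "(\<Sum>w\<in>T - {u}. slack u w) = 0"
      using \<open>P = 0\<close> fin slack_nonneg u unfolding P_def
      by (subst (asm) sum_nonneg_eq_0_iff) (auto intro: sum_nonneg)
    then have "slack u v = 0"
      using fin slack_nonneg u v by (subst (asm) sum_nonneg_eq_0_iff) auto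
    then show "card (nbrs E u \<inter> nbrs E v \<inter> nbrs E x) + 1 = c 2"
      unfolding slack_def by linarith
  qed
qed

lemma valency_le_dominating_set:
  assumes x: "x \<in> V" and S: "S \<subseteq> nbrs E x" and dom: "\<forall>w\<in>nbrs E x - S. \<exists>u\<in>S. E u w"
  shows "b 0 \<le> card S * (a_num b c 1 + 1)"
proof -
  have fin: "finite S"
    using S finite_nbrs finite_subset by blast
  have cover: "nbrs E x \<subseteq> (\<Union>u\<in>S. insert u (nbrs E u \<inter> nbrs E x))"
  proof
    fix w assume "w \<in> nbrs E x"
    then show "w \<in> (\<Union>u\<in>S. insert u (nbrs E u \<inter> nbrs E x))"
      using dom by (cases "w \<in> S") (auto simp: nbrs_def)
  qed
  have "b 0 = card (nbrs E x)"
    using card_nbrs[OF x] by simp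
  also have "\<dots> \<le> card (\<Union>u\<in>S. insert u (nbrs E u \<inter> nbrs E x))"
    using cover fin finite_nbrs by (intro card_mono) auto
  also have "\<dots> \<le> (\<Sum>u\<in>S. card (insert u (nbrs E u \<inter> nbrs E x)))"
    using fin by (rule card_UN_le)
  also have "\<dots> = (\<Sum>u\<in>S. a_num b c 1 + 1)"
    using S card_closed_local_nbhd by (intro sum.cong) (auto simp: nbrs_def)
  finally show ?thesis
    by simp
qed

lemma local_coclique_prop_valency_bound:
  "local_coclique_prop V E (nat \<lceil>real (b 0) / (real (a_num b c 1) + 1)\<rceil>)"
  unfolding local_coclique_prop_def
proof (intro ballI allI impI)
  fix x y z assume x: "x \<in> V" and yz: "E x y \<and> E x z \<and> y \<noteq> z \<and> \<not> E y z"
  have "{y, z} \<subseteq> nbrs E x" "coclique E {y, z}"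
    using yz adj_sym adj_irrefl by (auto simp: nbrs_def coclique_def)
  then obtain S where S: "{y, z} \<subseteq> S" "S \<subseteq> nbrs E x" "coclique E S"
    and dom: "\<forall>w\<in>nbrs E x - S. \<exists>u\<in>S. E u w"
    by (rule maximal_coclique_extension[OF finite_nbrs _ _ adj_irrefl adj_sym])
  have "real (b 0) \<le> real (card S) * (real (a_num b c 1) + 1)"
    using valency_le_dominating_set[OF x S(2) dom] by (metis of_nat_1 of_nat_add of_nat_le_iff of_nat_mult)
  then have "nat \<lceil>real (b 0) / (real (a_num b c 1) + 1)\<rceil> \<le> card S"
    by (simp add: divide_le_eq add_pos_nonneg nat_le_iff ceiling_le_iff)
  then show "\<exists>S. S \<subseteq> nbrs E x \<and> coclique E S \<and> y \<in> S \<and> z \<in> S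
      \<and> nat \<lceil>real (b 0) / (real (a_num b c 1) + 1)\<rceil> \<le> card S"
    using S by blast
qed

lemma local_coclique_prop_two: "local_coclique_prop V E 2"
  unfolding local_coclique_prop_def
proof (intro ballI allI impI)
  fix x y z assume "x \<in> V" and yz: "E x y \<and> E x z \<and> y \<noteq> z \<and> \<not> E y z"
  then have "{y, z} \<subseteq> nbrs E x" "coclique E {y, z}" "card {y, z} = 2"
    using adj_sym adj_irrefl by (auto simp: nbrs_def coclique_def)
  then show "\<exists>S. S \<subseteq> nbrs E x \<and> coclique E S \<and> y \<in> S \<and> z \<in> S \<and> 2 \<le> card S"
    by (intro exI[of _ "{y, z}"]) simp
qed

lemma local_coclique_of_card:
  assumes s: "local_coclique_prop V E s" and x: "x \<in> V"
    and uv: "E x u" "E x v" "u \<noteq> v" "\<not> E u v" and t: "2 \<le> t" "t \<le> s"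
  obtains T where "T \<subseteq> nbrs E x" "coclique E T" "u \<in> T" "v \<in> T" "card T = t"
proof -
  have "\<forall>y z. E x y \<and> E x z \<and> y \<noteq> z \<and> \<not> E y z \<longrightarrow>
      (\<exists>S. S \<subseteq> nbrs E x \<and> coclique E S \<and> y \<in> S \<and> z \<in> S \<and> s \<le> card S)"
    using s x unfolding local_coclique_prop_def by (rule bspec)
  then obtain S where S: "S \<subseteq> nbrs E x" "coclique E S" "u \<in> S" "v \<in> S" "s \<le> card S"
    using uv by blast
  have "card {u, v} \<le> t"
    using uv(3) t by simp
  moreover have "t \<le> card S"
    using S(5) t(2) by linarith
  moreover have "{u, v} \<subseteq> S"
    using S by simp
  moreover have "finite S"
    using S(1) finite_nbrs by (rule finite_subset)
  ultimately obtain T where T: "{u, v} \<subseteq> T" "T \<subseteq> S" "card T = t"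
    by (metis exists_subset_between)
  show thesis
  proof (rule that)
    show "T \<subseteq> nbrs E x"
      using T(2) S(1) by (rule subset_trans)
    show "coclique E T"
      using S(2) T(2) unfolding coclique_def by blast
  qed (use T in auto)
qed

lemma ratio_le_if_local_coclique_prop:
  assumes "diameter V E \<ge> 2" and s: "local_coclique_prop V E s" and t: "2 \<le> t" "t \<le> s"
  shows "(real t * (real (a_num b c 1) + 1) - real (b 0)) / real (t choose 2) \<le> real (c 2) - 1"
proof -
  obtain x y z where path: "E x y" "E x z" "y \<noteq> z" "\<not> E y z"
    using induced_path_if_diameter_ge_2[OF assms(1)] .
  then have "x \<in> V"
    using adj_in_V(1) by blast
  obtain T where "T \<subseteq> nbrs E x" "coclique E T" "card T = t"
    using local_coclique_of_card[OF s \<open>x \<in> V\<close> path t] by blast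
  then show ?thesis
    using coclique_ratio_bound(1)[OF \<open>x \<in> V\<close> _ _ _ t(1)] by blast
qed

lemma common_nbrs_clique_if_ratio_attained:
  assumes s: "local_coclique_prop V E s" and t: "2 \<le> t" "t \<le> s"
    and attained: "(real t * (real (a_num b c 1) + 1) - real (b 0)) / real (t choose 2) = real (c 2) - 1"
    and uv: "u \<in> V" "v \<in> V" "gdist V E u v = 2"
  shows "clique E (nbrs E u \<inter> nbrs E v)"
  unfolding clique_def
proof (intro ballI impI)
  fix w w' assume w: "w \<in> nbrs E u \<inter> nbrs E v" and w': "w' \<in> nbrs E u \<inter> nbrs E v" and "w \<noteq> w'"
  show "E w w'"
  proof (rule ccontr)
    assume "\<not> E w w'"
    have nonadj: "u \<noteq> v" "\<not> E u v"
      using gdist_2_iff uv by blast+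
    have wuv: "E w u" "E w v"
      using w adj_sym by (auto simp: nbrs_def)
    then have "w \<in> V"
      using adj_in_V(1) by blast
    obtain T where T: "T \<subseteq> nbrs E w" "coclique E T" "u \<in> T" "v \<in> T" "card T = t"
      using local_coclique_of_card[OF s \<open>w \<in> V\<close> wuv nonadj t] .
    then have "card (nbrs E u \<inter> nbrs E v \<inter> nbrs E w) + 1 = c 2"
      using coclique_ratio_bound(2)[OF \<open>w \<in> V\<close> T(1,2,5) t(1) attained] nonadj by blast
    moreover have "{w, w'} \<subseteq> nbrs E u \<inter> nbrs E v - nbrs E w"
      using w w' \<open>\<not> E w w'\<close> adj_irrefl by (auto simp: nbrs_def)
    then have "2 \<le> card (nbrs E u \<inter> nbrs E v - nbrs E w)"
      using \<open>w \<noteq> w'\<close> finite_nbrs by (metis card_2_iff card_mono finite_Diff finite_Int)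
    ultimately show False
      using card_common_nbrs_split[OF wuv nonadj, of w] by linarith
  qed
qed

lemma terwilliger_if_common_nbrs_cliques:
  assumes "diameter V E \<ge> 2"
    and cliques: "\<And>u v. u \<in> V \<Longrightarrow> v \<in> V \<Longrightarrow> gdist V E u v = 2 \<Longrightarrow> clique E (nbrs E u \<inter> nbrs E v)"
  shows "terwilliger V E"
proof -
  obtain x y z where path: "E x y" "E x z" "y \<noteq> z" "\<not> E y z"
    using induced_path_if_diameter_ge_2[OF assms(1)] .
  have "1 \<le> c 2"
    using card_common_local_nbrs_less[OF path] by linarith
  moreover have "\<not> complete_graph V E"
    using path adj_in_V unfolding complete_graph_def by blast
  ultimately show ?thesis
    unfolding terwilliger_def using connected cliques card_common_nbrs_dist_2 by blast
qed

end

theorem proposition3: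
  fixes V :: "'a set" and E :: "'a \<Rightarrow> 'a \<Rightarrow> bool"
    and b c :: "nat \<Rightarrow> nat" and k D s :: nat
  assumes drg: "distance_regular V E b c"
    and k: "k = b 0"
    and D: "D = diameter V E" and D2: "D \<ge> 2"
    and s_prop: "local_coclique_prop V E s"
    and s_max: "\<forall>t. local_coclique_prop V E t \<longrightarrow> t \<le> s"
  shows "real s \<ge> real k / (real (a_num b c 1) + 1)
    \<and> (let M = Max ((\<lambda>t. (real t * (real (a_num b c 1) + 1) - real k) / real (t choose 2)) ` {2..s})
       in real (c 2) - 1 \<ge> M \<and> (real (c 2) - 1 = M \<longrightarrow> terwilliger V E))"
proof -
  interpret distance_regular_graph V E b c
    using drg by (rule distance_regular_graph.intro)
  define ratio where "ratio t = (real t * (real (a_num b c 1) + 1) - real k) / real (t choose 2)" for t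
  have "nat \<lceil>real k / (real (a_num b c 1) + 1)\<rceil> \<le> s"
    using s_max local_coclique_prop_valency_bound k by blast
  then have part_i: "real k / (real (a_num b c 1) + 1) \<le> real s"
    using real_nat_ceiling_ge of_nat_mono order_trans by blast
  have ratio_le: "ratio t \<le> real (c 2) - 1" if "t \<in> {2..s}" for t
    using ratio_le_if_local_coclique_prop D D2 s_prop that unfolding ratio_def k by auto
  have "2 \<le> s"
    using s_max local_coclique_prop_two by blast
  then have fin: "finite (ratio ` {2..s})" "ratio ` {2..s} \<noteq> {}"
    by auto
  have "Max (ratio ` {2..s}) \<le> real (c 2) - 1"
    using fin ratio_le by (simp add: Max_le_iff)
  moreover have "terwilliger V E" if attained: "real (c 2) - 1 = Max (ratio ` {2..s})"
  proof -
    obtain t where "t \<in> {2..s}" "ratio t = real (c 2) - 1"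
      using Max_in[OF fin] attained by auto
    then show ?thesis
      using terwilliger_if_common_nbrs_cliques D D2 common_nbrs_clique_if_ratio_attained[OF s_prop]
      unfolding ratio_def k by auto
  qed
  ultimately show ?thesis
    using part_i unfolding Let_def ratio_def by blast
qed

end
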